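(* Assume (H1). Let $\mathcal H=\begin{pmatrix}A+G&\gamma I\\-\widehat Q&-(A+G)^T\end{pmatrix}\in\mathbb R^{2n\times 2n}$ and $\Phi(t)=e^{\mathcal Ht}=\begin{pmatrix}\Phi_{11}(t)&\Phi_{12}(t)\\\Phi_{21}(t)&\Phi_{22}(t)\end{pmatrix}$ with $n\times n$ blocks. Then $\Phi_{22}(T)-H\Phi_{12}(T)$ is nonsingular.
   Context: Fix $n\ge1$, $T>0$, constant matrices $A,G,\Gamma\in\mathbb R^{n\times n}$, $\gamma>0$, symmetric $Q\ge0$, $H\ge0$ ($n\times n$). Write $\widehat Q=(I-\Gamma)^TQ(I-\Gamma)$ and $\|h\|_{L^2}=(\int_0^T|h|^2dt)^{1/2}$. For $g\in L^2(0,T;\mathbb R^n)$ let $\dot z=(A+G)z+g$, $z(0)=0$, and $\bar J''(g)=\int_0^T\{-z^T\widehat Qz+\frac1\gamma|g|^2\}dt-z(T)^THz(T)$. (H1): there exists $\epsilon_0>0$ with $\bar J''(g)\ge\epsilon_0\|g\|_{L^2}^2$ for all $g\in L^2(0,T;\mathbb R^n)$. *)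

theory Defs
  imports "HOL-Analysis.Analysis"
begin

definition mat_pow :: "real^'m^'m \<Rightarrow> nat \<Rightarrow> real^'m^'m" where
  "mat_pow M k = (((**) M) ^^ k) (mat 1)"

definition mat_exp :: "real^'m^'m \<Rightarrow> real^'m^'m" where
  "mat_exp M = (\<Sum>k. (1 / fact k) *\<^sub>R mat_pow M k)"

definition psd :: "real^'n^'n \<Rightarrow> bool" where
  "psd M \<longleftrightarrow> transpose M = M \<and> (\<forall>x. 0 \<le> x \<bullet> (M *v x))"

definition block_mat :: "real^'n^'n \<Rightarrow> real^'n^'n \<Rightarrow> real^'n^'n \<Rightarrow> real^'n^'n
    \<Rightarrow> real^('n+'n)^('n+'n)" where
  "block_mat M11 M12 M21 M22 = (\<chi> i j. case i of
      Inl a \<Rightarrow> (case j of Inl b \<Rightarrow> M11 $ a $ b | Inr b \<Rightarrow> M12 $ a $ b)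
    | Inr a \<Rightarrow> (case j of Inl b \<Rightarrow> M21 $ a $ b | Inr b \<Rightarrow> M22 $ a $ b))"

definition blk12 :: "real^('n+'n)^('n+'n) \<Rightarrow> real^'n^'n" where
  "blk12 M = (\<chi> a b. M $ Inl a $ Inr b)"

definition blk22 :: "real^('n+'n)^('n+'n) \<Rightarrow> real^'n^'n" where
  "blk22 M = (\<chi> a b. M $ Inr a $ Inr b)"

definition L2_on :: "real \<Rightarrow> (real \<Rightarrow> real^'n) \<Rightarrow> bool" where
  "L2_on T g \<longleftrightarrow> g measurable_on {0..T} \<and> (\<lambda>t. (norm (g t))\<^sup>2) integrable_on {0..T}"

definition L2_norm_sq :: "real \<Rightarrow> (real \<Rightarrow> real^'n) \<Rightarrow> real" where
  "L2_norm_sq T g = integral {0..T} (\<lambda>t. (norm (g t))\<^sup>2)"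

text \<open>z is the (Caratheodory) solution of z' = M z + g, z(0) = 0 on [0,T], in integral form.\<close>
definition is_state :: "real \<Rightarrow> real^'n^'n \<Rightarrow> (real \<Rightarrow> real^'n) \<Rightarrow> (real \<Rightarrow> real^'n) \<Rightarrow> bool" where
  "is_state T M g z \<longleftrightarrow> continuous_on {0..T} z \<and>
     (\<forall>t\<in>{0..T}. (\<lambda>s. M *v z s + g s) integrable_on {0..t} \<and>
                  z t = integral {0..t} (\<lambda>s. M *v z s + g s))"

definition Jpp :: "real \<Rightarrow> real \<Rightarrow> real^'n^'n \<Rightarrow> real^'n^'n \<Rightarrow> (real \<Rightarrow> real^'n) \<Rightarrow> (real \<Rightarrow> real^'n) \<Rightarrow> real" where
  "Jpp T \<gamma> Qh H g z = integral {0..T} (\<lambda>t. - (z t \<bullet> (Qh *v z t)) + (1/\<gamma>) * (norm (g t))\<^sup>2)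
       - z T \<bullet> (H *v z T)"

end

theory Submission
  imports Defs
begin

text \<open>
  Let \<open>v\<close> lie in the kernel of \<open>\<Phi>\<^sub>2\<^sub>2(T) - H \<Phi>\<^sub>1\<^sub>2(T)\<close> and follow the Hamiltonian flow
  \<open>(z, l)(t) = \<Phi>(t) (0, v)\<close>. Then \<open>z\<close> is the state driven by the control \<open>g = \<gamma> l\<close>, and
  \<open>l(T) = H z(T)\<close>. Along the flow \<open>(l \<bullet> z)' = |g|\<^sup>2/\<gamma> - z \<bullet> Q\<^sub>h z\<close>, so integrating over
  \<open>[0, T]\<close> gives \<open>J''(g) = l(T) \<bullet> z(T) - z(T) \<bullet> H z(T) = 0\<close>. By (H1) the control vanishes,
  hence \<open>v = l(0) = g(0)/\<gamma> = 0\<close>.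
\<close>

lemma summable_exp_series:
  fixes u :: "nat \<Rightarrow> 'a::banach"
  assumes bound: "\<And>k. norm (u k) \<le> C * c^k" and "c \<ge> 0"
  shows "summable (\<lambda>k. (t^k / fact k) *\<^sub>R u k)"
proof (rule summable_comparison_test)
  show "summable (\<lambda>k. C * (inverse (fact k) * (c * \<bar>t\<bar>)^k))"
    by (intro summable_mult summable_exp)
  have "norm ((t^k / fact k) *\<^sub>R u k) \<le> C * (inverse (fact k) * (c * \<bar>t\<bar>)^k)" for k
  proof -
    have "norm ((t^k / fact k) *\<^sub>R u k) = (\<bar>t\<bar>^k / fact k) * norm (u k)"
      by (simp add: power_abs)
    also have "\<dots> \<le> (\<bar>t\<bar>^k / fact k) * (C * c^k)"
      by (intro mult_left_mono bound) auto
    also have "\<dots> = C * (inverse (fact k) * (c * \<bar>t\<bar>)^k)"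
      by (simp add: power_mult_distrib field_simps)
    finally show ?thesis .
  qed
  then show "\<exists>N. \<forall>k\<ge>N. norm ((t^k / fact k) *\<^sub>R u k) \<le> C * (inverse (fact k) * (c * \<bar>t\<bar>)^k)"
    by blast
qed

lemma has_vector_derivative_componentwise:
  fixes f :: "real \<Rightarrow> 'a::euclidean_space"
  shows "(f has_vector_derivative f') (at t within S) \<longleftrightarrow>
    (\<forall>b\<in>Basis. ((\<lambda>x. f x \<bullet> b) has_real_derivative f' \<bullet> b) (at t within S))"
proof -
  have "(\<lambda>h. (h *\<^sub>R f') \<bullet> b) = (*) (f' \<bullet> b)" for b
    by (auto simp: inner_scaleR_left)
  then show ?thesis
    unfolding has_vector_derivative_def has_field_derivative_def
    by (subst has_derivative_componentwise_within) simp
qed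

lemma has_vector_derivative_exp_series:
  fixes u :: "nat \<Rightarrow> 'a::euclidean_space"
  assumes bound: "\<And>k. norm (u k) \<le> C * c^k" and "c \<ge> 0"
  shows "((\<lambda>t. \<Sum>k. (t^k / fact k) *\<^sub>R u k) has_vector_derivative
           (\<Sum>k. (t^k / fact k) *\<^sub>R u (Suc k))) (at t)"
  unfolding has_vector_derivative_componentwise
proof
  fix b :: 'a
  have bound_Suc: "norm (u (Suc k)) \<le> (C * c) * c^k" for k
    using bound[of "Suc k"] by (simp add: algebra_simps)
  have inner_series: "(\<Sum>k. (x^k / fact k) *\<^sub>R v k) \<bullet> b = (\<Sum>k. (v k \<bullet> b / fact k) * x^k)"
    if "summable (\<lambda>k. (x^k / fact k) *\<^sub>R v k)" for x and v :: "nat \<Rightarrow> 'a"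
    using bounded_linear.suminf[OF bounded_linear_inner_left that, of b] by (simp add: ac_simps)
  have "summable (\<lambda>k. (u k \<bullet> b / fact k) * y^k)" for y
    using bounded_linear.summable[OF bounded_linear_inner_left summable_exp_series[OF bound \<open>c \<ge> 0\<close>, of y], of b]
    by (simp add: ac_simps)
  then have "((\<lambda>x. \<Sum>k. (u k \<bullet> b / fact k) * x^k) has_real_derivative
      (\<Sum>k. diffs (\<lambda>k. u k \<bullet> b / fact k) k * t^k)) (at t)"
    by (rule termdiffs_strong_converges_everywhere)
  moreover have "(\<lambda>x. (\<Sum>k. (x^k / fact k) *\<^sub>R u k) \<bullet> b) = (\<lambda>x. \<Sum>k. (u k \<bullet> b / fact k) * x^k)"
    by (intro ext inner_series summable_exp_series[OF bound \<open>c \<ge> 0\<close>])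
  moreover have "diffs (\<lambda>k. u k \<bullet> b / fact k) k = u (Suc k) \<bullet> b / fact k" for k
    by (simp add: diffs_def)
  then have "(\<Sum>k. (t^k / fact k) *\<^sub>R u (Suc k)) \<bullet> b = (\<Sum>k. diffs (\<lambda>k. u k \<bullet> b / fact k) k * t^k)"
    by (simp only: inner_series[OF summable_exp_series[OF bound_Suc \<open>c \<ge> 0\<close>]])
  ultimately show "((\<lambda>x. (\<Sum>k. (x^k / fact k) *\<^sub>R u k) \<bullet> b) has_real_derivative
      (\<Sum>k. (t^k / fact k) *\<^sub>R u (Suc k)) \<bullet> b) (at t)"
    by (simp only:)
qed

lemma mat_pow_0 [simp]: "mat_pow M 0 = mat 1"
  by (simp add: mat_pow_def)

lemma mat_pow_Suc [simp]: "mat_pow M (Suc k) = M ** mat_pow M k"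
  by (simp add: mat_pow_def)

lemma mat_pow_scaleR: "mat_pow (t *\<^sub>R M) k = t^k *\<^sub>R mat_pow M k"
  by (induction k) (simp_all add: matrix_scalar_ac scalar_matrix_assoc[symmetric])

lemma bounded_linear_matrix_mult_left: "bounded_linear (\<lambda>P :: real^'p^'n. M ** P)"
  unfolding linear_conv_bounded_linear[symmetric]
  by (rule linearI) (simp_all add: matrix_add_ldistrib matrix_scalar_ac scalar_matrix_assoc)

lemma bounded_linear_matrix_vector_mult_left: "bounded_linear (\<lambda>P :: real^'n^'m. P *v w)"
  unfolding linear_conv_bounded_linear[symmetric]
  by (rule linearI) (simp_all add: matrix_vector_mult_add_rdistrib scaleR_matrix_vector_assoc)

lemma norm_mat_pow_le:
  fixes M :: "real^'m^'m"
  obtains K where "K \<ge> 0" "\<And>k. norm (mat_pow M k) \<le> norm (mat 1 :: real^'m^'m) * K^k"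
proof -
  obtain K where K: "K \<ge> 0" "\<And>P :: real^'m^'m. norm (M ** P) \<le> norm P * K"
    using bounded_linear.nonneg_bounded[OF bounded_linear_matrix_mult_left] by blast
  have "norm (mat_pow M k) \<le> norm (mat 1 :: real^'m^'m) * K^k" for k
  proof (induction k)
    case (Suc k)
    have "norm (mat_pow M (Suc k)) \<le> norm (mat_pow M k) * K"
      using K(2) by simp
    also have "\<dots> \<le> norm (mat 1 :: real^'m^'m) * K^k * K"
      using Suc K(1) by (rule mult_right_mono)
    finally show ?case
      by (simp add: ac_simps)
  qed simp
  with K(1) that show ?thesis
    by blast
qed

lemma mat_exp_scaleR: "mat_exp (t *\<^sub>R M) = (\<Sum>k. (t^k / fact k) *\<^sub>R mat_pow M k)"
  by (simp add: mat_exp_def mat_pow_scaleR)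

lemma mat_exp_zero: "mat_exp (0 :: real^'m^'m) = mat 1"
proof -
  have "(\<lambda>k. (1 / fact k) *\<^sub>R mat_pow (0 :: real^'m^'m) k) = (\<lambda>k. if k = 0 then mat 1 else 0)"
    by (auto simp: fun_eq_iff gr0_conv_Suc)
  then show ?thesis
    unfolding mat_exp_def using sums_single[of 0 "\<lambda>_. mat 1 :: real^'m^'m"] sums_unique by metis
qed

lemma has_vector_derivative_mat_exp:
  fixes N :: "real^'m^'m"
  shows "((\<lambda>t. mat_exp (t *\<^sub>R N)) has_vector_derivative N ** mat_exp (t *\<^sub>R N)) (at t)"
proof -
  obtain K where K: "K \<ge> 0" "\<And>k. norm (mat_pow N k) \<le> norm (mat 1 :: real^'m^'m) * K^k"
    using norm_mat_pow_le by blast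
  have "N ** mat_exp (t *\<^sub>R N) = (\<Sum>k. N ** ((t^k / fact k) *\<^sub>R mat_pow N k))"
    unfolding mat_exp_scaleR
    by (rule bounded_linear.suminf[OF bounded_linear_matrix_mult_left summable_exp_series[OF K(2,1)]])
  also have "\<dots> = (\<Sum>k. (t^k / fact k) *\<^sub>R mat_pow N (Suc k))"
    by (simp add: matrix_scalar_ac scalar_matrix_assoc)
  finally show ?thesis
    unfolding mat_exp_scaleR using has_vector_derivative_exp_series[OF K(2,1)] by simp
qed

lemma has_vector_derivative_mat_exp_vec:
  fixes N :: "real^'m^'m"
  shows "((\<lambda>t. mat_exp (t *\<^sub>R N) *v w) has_vector_derivative N *v (mat_exp (t *\<^sub>R N) *v w)) (at t)"
  using bounded_linear.has_vector_derivative[OF bounded_linear_matrix_vector_mult_left has_vector_derivative_mat_exp]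
  by (simp add: matrix_vector_mul_assoc)

definition upper_half :: "real^('n+'n) \<Rightarrow> real^'n" where
  "upper_half y = (\<chi> a. y $ Inl a)"

definition lower_half :: "real^('n+'n) \<Rightarrow> real^'n" where
  "lower_half y = (\<chi> a. y $ Inr a)"

definition lower_embed :: "real^'n \<Rightarrow> real^('n+'n)" where
  "lower_embed v = (\<chi> i. case i of Inl _ \<Rightarrow> 0 | Inr b \<Rightarrow> v $ b)"

lemma upper_half_lower_embed [simp]: "upper_half (lower_embed v) = 0"
  by (simp add: upper_half_def lower_embed_def vec_eq_iff)

lemma lower_half_lower_embed [simp]: "lower_half (lower_embed v) = v"
  by (simp add: lower_half_def lower_embed_def vec_eq_iff)

lemma bounded_linear_upper_half: "bounded_linear upper_half"
  unfolding linear_conv_bounded_linear[symmetric]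
  by (rule linearI) (simp_all add: upper_half_def vec_eq_iff)

lemma bounded_linear_lower_half: "bounded_linear lower_half"
  unfolding linear_conv_bounded_linear[symmetric]
  by (rule linearI) (simp_all add: lower_half_def vec_eq_iff)

lemma sum_UNIV_Plus:
  "(\<Sum>x\<in>(UNIV::('a::finite + 'b::finite) set). f x) = (\<Sum>a\<in>UNIV. f (Inl a)) + (\<Sum>b\<in>UNIV. f (Inr b))"
  by (subst UNIV_Plus_UNIV[symmetric], subst sum.Plus) (auto simp: o_def)

lemma blk12_mult_vec: "blk12 P *v v = upper_half (P *v lower_embed v)"
  by (simp add: blk12_def upper_half_def lower_embed_def matrix_vector_mult_def vec_eq_iff sum_UNIV_Plus)

lemma blk22_mult_vec: "blk22 P *v v = lower_half (P *v lower_embed v)"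
  by (simp add: blk22_def lower_half_def lower_embed_def matrix_vector_mult_def vec_eq_iff sum_UNIV_Plus)

lemma upper_half_block_mat_mult_vec:
  "upper_half (block_mat M11 M12 M21 M22 *v y) = M11 *v upper_half y + M12 *v lower_half y"
  by (simp add: block_mat_def upper_half_def lower_half_def matrix_vector_mult_def vec_eq_iff sum_UNIV_Plus)

lemma lower_half_block_mat_mult_vec:
  "lower_half (block_mat M11 M12 M21 M22 *v y) = M21 *v upper_half y + M22 *v lower_half y"
  by (simp add: block_mat_def upper_half_def lower_half_def matrix_vector_mult_def vec_eq_iff sum_UNIV_Plus)

lemma matrix_vector_mult_uminus_left: "(- A) *v x = - (A *v (x :: real^'n))"
  by (simp add: matrix_vector_mult_def vec_eq_iff sum_negf)

lemma inner_transpose_mult_vec: "(transpose M *v x) \<bullet> y = x \<bullet> (M *v (y :: real^'n))"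
  by (simp add: dot_lmul_matrix)

lemma hamiltonian_energy_identity:
  fixes z l g :: "real \<Rightarrow> real^'n"
  assumes z': "\<And>t. (z has_vector_derivative M *v z t + g t) (at t)"
    and l': "\<And>t. (l has_vector_derivative - (Qh *v z t) - transpose M *v l t) (at t)"
    and "a \<le> b"
  shows "((\<lambda>t. l t \<bullet> g t - z t \<bullet> (Qh *v z t)) has_integral (l b \<bullet> z b - l a \<bullet> z a)) {a..b}"
proof -
  have deriv: "((\<lambda>t. l t \<bullet> z t) has_vector_derivative l t \<bullet> g t - z t \<bullet> (Qh *v z t)) (at t)" for t
  proof -
    have "l t \<bullet> (M *v z t + g t) + (- (Qh *v z t) - transpose M *v l t) \<bullet> z t
        = l t \<bullet> g t - z t \<bullet> (Qh *v z t)"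
      unfolding inner_add_right inner_diff_left inner_minus_left inner_transpose_mult_vec
        inner_commute[of "Qh *v z t" "z t"]
      by linarith
    then show ?thesis
      using bounded_bilinear.has_vector_derivative[OF bounded_bilinear_inner l'[of t] z'[of t]]
      by (simp only:)
  qed
  show ?thesis
    using \<open>a \<le> b\<close> by (intro fundamental_theorem_of_calculus has_vector_derivative_at_within[OF deriv])
qed

lemma is_state_if_has_vector_derivative:
  assumes z': "\<And>t. (z has_vector_derivative M *v z t + g t) (at t)" and "z 0 = 0"
  shows "is_state T M g z"
  unfolding is_state_def
proof (intro conjI ballI)
  show "continuous_on {0..T} z"
    using z' has_vector_derivative_continuous continuous_at_imp_continuous_on by blast
  fix t assume "t \<in> {0..T}"
  then have "((\<lambda>s. M *v z s + g s) has_integral z t - z 0) {0..t}"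
    by (intro fundamental_theorem_of_calculus has_vector_derivative_at_within[OF z']) auto
  then show "(\<lambda>s. M *v z s + g s) integrable_on {0..t}" "z t = integral {0..t} (\<lambda>s. M *v z s + g s)"
    using \<open>z 0 = 0\<close> by (auto simp: has_integral_integrable_integral)
qed

lemma L2_on_if_continuous: "continuous_on {0..T} g \<Longrightarrow> L2_on T g"
  unfolding L2_on_def
  by (auto intro!: integrable_continuous_interval continuous_intros continuous_imp_measurable_on_sets_lebesgue
      simp: measurable_on_iff_borel_measurable)

lemma L2_norm_sq_eq_0_iff:
  assumes "continuous_on {0..T} g" and "T > 0"
  shows "L2_norm_sq T g = 0 \<longleftrightarrow> (\<forall>t\<in>{0..T}. g t = 0)"
proof -
  have "continuous_on {0..T} (\<lambda>t. (norm (g t))\<^sup>2)"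
    using assms(1) by (intro continuous_intros)
  then show ?thesis
    unfolding L2_norm_sq_def using integral_eq_0_iff[OF _ \<open>T > 0\<close>] by simp
qed

lemma L2_norm_sq_nonneg: "continuous_on {0..T} g \<Longrightarrow> 0 \<le> L2_norm_sq T g"
  unfolding L2_norm_sq_def
  by (intro integral_nonneg integrable_continuous_interval continuous_intros) auto

lemma hamiltonian_flow_has_vector_derivative:
  fixes M Qh :: "real^'n^'n" and w :: "real^('n+'n)" and \<gamma> :: real
  defines "Y \<equiv> \<lambda>t. mat_exp (t *\<^sub>R block_mat M (\<gamma> *\<^sub>R mat 1) (- Qh) (- transpose M)) *v w"
  shows "((\<lambda>t. upper_half (Y t)) has_vector_derivative
            M *v upper_half (Y t) + \<gamma> *\<^sub>R lower_half (Y t)) (at t)"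
    and "((\<lambda>t. lower_half (Y t)) has_vector_derivative
            - (Qh *v upper_half (Y t)) - transpose M *v lower_half (Y t)) (at t)"
proof -
  have Y': "(Y has_vector_derivative block_mat M (\<gamma> *\<^sub>R mat 1) (- Qh) (- transpose M) *v Y t) (at t)"
    unfolding Y_def by (rule has_vector_derivative_mat_exp_vec)
  show "((\<lambda>t. upper_half (Y t)) has_vector_derivative
            M *v upper_half (Y t) + \<gamma> *\<^sub>R lower_half (Y t)) (at t)"
    using bounded_linear.has_vector_derivative[OF bounded_linear_upper_half Y']
    by (simp add: upper_half_block_mat_mult_vec scaleR_matrix_vector_assoc[symmetric])
  show "((\<lambda>t. lower_half (Y t)) has_vector_derivative
            - (Qh *v upper_half (Y t)) - transpose M *v lower_half (Y t)) (at t)"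
    using bounded_linear.has_vector_derivative[OF bounded_linear_lower_half Y']
    by (simp add: lower_half_block_mat_mult_vec matrix_vector_mult_uminus_left)
qed

lemma invertible_blk22_minus_mult_blk12:
  fixes M Qh H :: "real^'n^'n" and \<gamma> T \<epsilon> :: real
  assumes "\<gamma> > 0" and "T > 0" and "\<epsilon> > 0"
    and coercive: "\<And>g z. L2_on T g \<Longrightarrow> is_state T M g z \<Longrightarrow> \<epsilon> * L2_norm_sq T g \<le> Jpp T \<gamma> Qh H g z"
  defines "\<Phi> \<equiv> mat_exp (T *\<^sub>R block_mat M (\<gamma> *\<^sub>R mat 1) (- Qh) (- transpose M))"
  shows "invertible (blk22 \<Phi> - H ** blk12 \<Phi>)"
proof -
  have "v = 0" if kernel: "(blk22 \<Phi> - H ** blk12 \<Phi>) *v v = 0" for v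
  proof -
    define Y where "Y t = mat_exp (t *\<^sub>R block_mat M (\<gamma> *\<^sub>R mat 1) (- Qh) (- transpose M)) *v lower_embed v"
      for t
    define z where "z t = upper_half (Y t)" for t
    define l where "l t = lower_half (Y t)" for t
    define g where "g t = \<gamma> *\<^sub>R l t" for t
    have z': "(z has_vector_derivative M *v z t + g t) (at t)" for t
      unfolding z_def l_def g_def Y_def by (rule hamiltonian_flow_has_vector_derivative)
    have l': "(l has_vector_derivative - (Qh *v z t) - transpose M *v l t) (at t)" for t
      unfolding z_def l_def Y_def by (rule hamiltonian_flow_has_vector_derivative)
    have "z 0 = 0" and "l 0 = v"
      by (simp_all add: z_def l_def Y_def mat_exp_zero)
    have "l T = H *v z T"
      using kernel by (simp add: z_def l_def Y_def \<Phi>_def blk12_mult_vec blk22_mult_vec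
          matrix_vector_mult_diff_rdistrib matrix_vector_mul_assoc[symmetric])
    have g_cont: "continuous_on {0..T} g"
      unfolding g_def using l' has_vector_derivative_continuous
      by (intro continuous_intros continuous_at_imp_continuous_on) blast
    have "l t \<bullet> g t = (1 / \<gamma>) * (norm (g t))\<^sup>2" for t
      using \<open>\<gamma> > 0\<close> by (simp add: g_def dot_square_norm power2_eq_square)
    then have "((\<lambda>t. - (z t \<bullet> (Qh *v z t)) + (1 / \<gamma>) * (norm (g t))\<^sup>2) has_integral l T \<bullet> z T) {0..T}"
      using hamiltonian_energy_identity[OF z' l', of 0 T] \<open>T > 0\<close> \<open>z 0 = 0\<close> by simp
    then have "Jpp T \<gamma> Qh H g z = 0"
      by (simp add: Jpp_def integral_unique \<open>l T = H *v z T\<close> inner_commute)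
    then have "L2_norm_sq T g = 0"
      using coercive[OF L2_on_if_continuous[OF g_cont] is_state_if_has_vector_derivative[OF z' \<open>z 0 = 0\<close>]]
        L2_norm_sq_nonneg[OF g_cont] \<open>\<epsilon> > 0\<close>
      by (simp add: mult_le_0_iff)
    then have "g 0 = 0"
      using L2_norm_sq_eq_0_iff[OF g_cont \<open>T > 0\<close>] \<open>T > 0\<close> by simp
    then show "v = 0"
      using \<open>\<gamma> > 0\<close> \<open>l 0 = v\<close> by (simp add: g_def)
  qed
  then show ?thesis
    unfolding invertible_left_inverse matrix_left_invertible_ker by blast
qed

theorem proposition7:
  fixes A G \<Gamma> Q H :: "real^'n^'n" and \<gamma> T :: real
  assumes "T > 0" and "\<gamma> > 0" and "psd Q" and "psd H"
  assumes H1: "\<exists>\<epsilon>0>0. \<forall>g z. L2_on T g \<longrightarrow>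
      is_state T (A + G) g z \<longrightarrow>
      Jpp T \<gamma> (transpose (mat 1 - \<Gamma>) ** Q ** (mat 1 - \<Gamma>)) H g z \<ge> \<epsilon>0 * L2_norm_sq T g"
  shows "invertible
    (let Qh = transpose (mat 1 - \<Gamma>) ** Q ** (mat 1 - \<Gamma>);
         \<H> = block_mat (A + G) (\<gamma> *\<^sub>R mat 1) (- Qh) (- transpose (A + G));
         \<Phi> = mat_exp (T *\<^sub>R \<H>)
     in blk22 \<Phi> - H ** blk12 \<Phi>)"
proof -
  obtain \<epsilon> where "\<epsilon> > 0" and "\<And>g z. L2_on T g \<Longrightarrow> is_state T (A + G) g z \<Longrightarrow>
      \<epsilon> * L2_norm_sq T g \<le> Jpp T \<gamma> (transpose (mat 1 - \<Gamma>) ** Q ** (mat 1 - \<Gamma>)) H g z"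
    using H1 by blast
  then show ?thesis
    unfolding Let_def using invertible_blk22_minus_mult_blk12 \<open>\<gamma> > 0\<close> \<open>T > 0\<close> by blast
qed

end
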